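(* Let $Q$ be a quiver with a contravariant involution $\sigma$. The category $\mathsf{Rep}_{\mathbb{F}_1}(Q)$, with the duality $(P,\Theta)$ described below, is combinatorial, has the finite direct decomposition property and satisfies the Reduction Assumption.
   Context: $\mathsf{Vect}_{\mathbb{F}_1}$: objects are finite pointed sets (basepoint $*$); morphisms are basepoint preserving maps $f:V\to W$ whose restriction to $V\setminus f^{-1}( * )$ is injective. Inflations are injective morphisms, deflations are surjective morphisms for which the preimage of each non-basepoint is a singleton; zero object $\{*\}$. The cokernel $V/U$ of $U\rightarrowtail V$ collapses $U$ to $*$. Coproduct $V\oplus V'$ is the wedge (disjoint union with basepoints identified). Duality $V^\vee=\mathrm{Hom}(V,\{*,1\})$, identified with $V$ via $v\mapsto\delta_v$, so $(-)^\vee$ squares to the identity. $\mathsf{Rep}_{\mathbb{F}_1}(Q)$: representations $(U=\bigoplus_{i\in Q_0}U_i,\{u_\alpha\}_{\alpha\in Q_1})$ with $U_i\in\mathsf{Vect}_{\mathbb{F}_1}$, finitely many non-zero, and morphisms $u_\alpha:U_i\to U_j$ for $\alpha:i\to j$; inflations, deflations, coproducts are defined pointwise in $Q_0$. A contravariant involution $\sigma$ consists of involutions of $Q_0$ and $Q_1$ with $\sigma(\alpha):\sigma(j)\to\sigma(i)$ for $\alpha:i\to j$. Duality: $P(U)_i=U^\vee_{\sigma(i)}$, $P(u)_\alpha=u^\vee_{\sigma(\alpha)}$, $P(\{\phi_i\})=\{\phi^\vee_{\sigma(i)}\}$, $\Theta=\mathrm{id}$. A symmetric form is $(N,\psi_N)$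 with $\psi_N:N\to P(N)$ an isomorphism and $P(\psi_N)\Theta_N=\psi_N$; isometries preserve $\psi$. For an inflation $j:U\rightarrowtail N$, $U^\perp$ is a kernel of $P(j)\psi_N$; $j$ is isotropic if $P(j)\psi_Nj=0$ and $U\to U^\perp$ is an inflation. Combinatorial: each inflation $j:U\rightarrowtail X_1\oplus X_2$ equals $(j_1\oplus j_2)\circ f$ for inflations $j_k:U_k\rightarrowtail X_k$ and an isomorphism $f:U\to U_1\oplus U_2$. Finite direct decomposition property: each object $W$ admits only finitely many decompositions $U\oplus V\simeq W$ up to isomorphism. Reduction Assumption: for each isotropic $U\rightarrowtail N$ with $k:U^\perp\rightarrowtail N$ and $\pi:U^\perp\twoheadrightarrow U^\perp/U=:N/\!\!/U$, there is a symmetric form $\psi_{N/\!\!/U}$, unique up to isometry, with $P(k)\psi_Nk=P(\pi)\psi_{N/\!\!/U}\pi$. *)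

theory Defs
  imports Main
begin

record ('v, 'e) quiver =
  src :: "'e \<Rightarrow> 'v"
  tgt :: "'e \<Rightarrow> 'v"
  sv  :: "'v \<Rightarrow> 'v"
  se  :: "'e \<Rightarrow> 'e"

definition quiver_inv :: "('v, 'e) quiver \<Rightarrow> bool" where
  "quiver_inv Q \<longleftrightarrow> sv Q \<circ> sv Q = id \<and> se Q \<circ> se Q = id \<and>
     (\<forall>a. src Q (se Q a) = sv Q (tgt Q a) \<and> tgt Q (se Q a) = sv Q (src Q a))"

text \<open>A finite pointed set is modelled by its finite set of non-basepoint elements
(a finite subset of nat); a pointed map is a partial map, None being the basepoint.\<close>

definition f1_mor :: "nat set \<Rightarrow> nat set \<Rightarrow> (nat \<rightharpoonup> nat) \<Rightarrow> bool" where
  "f1_mor V W f \<longleftrightarrow> dom f \<subseteq> V \<and> ran f \<subseteq> W \<and> inj_on f (dom f)"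

definition kcomp :: "(nat \<rightharpoonup> nat) \<Rightarrow> (nat \<rightharpoonup> nat) \<Rightarrow> (nat \<rightharpoonup> nat)" where
  "kcomp g f = (\<lambda>x. Option.bind (f x) g)"

text \<open>Dual (transpose) map, using the identification of a dual with the set itself.\<close>
definition transp :: "(nat \<rightharpoonup> nat) \<Rightarrow> (nat \<rightharpoonup> nat)" where
  "transp f = (\<lambda>w. if w \<in> ran f then Some (THE v. f v = Some w) else None)"

type_synonym 'v obj_sets = "'v \<Rightarrow> nat set"
type_synonym ('v, 'e) rep = "('v \<Rightarrow> nat set) \<times> ('e \<Rightarrow> nat \<rightharpoonup> nat)"
type_synonym 'v rmor = "'v \<Rightarrow> nat \<rightharpoonup> nat"

definition is_rep :: "('v, 'e) quiver \<Rightarrow> ('v, 'e) rep \<Rightarrow> bool" where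
  "is_rep Q R \<longleftrightarrow> finite {i. fst R i \<noteq> {}} \<and> (\<forall>i. finite (fst R i)) \<and>
     (\<forall>a. f1_mor (fst R (src Q a)) (fst R (tgt Q a)) (snd R a))"

definition rep_mor :: "('v, 'e) quiver \<Rightarrow> ('v, 'e) rep \<Rightarrow> ('v, 'e) rep \<Rightarrow> 'v rmor \<Rightarrow> bool" where
  "rep_mor Q R S \<phi> \<longleftrightarrow> (\<forall>i. f1_mor (fst R i) (fst S i) (\<phi> i)) \<and>
     (\<forall>a. kcomp (\<phi> (tgt Q a)) (snd R a) = kcomp (snd S a) (\<phi> (src Q a)))"

definition rcomp :: "'v rmor \<Rightarrow> 'v rmor \<Rightarrow> 'v rmor" where
  "rcomp \<psi> \<phi> = (\<lambda>i. kcomp (\<psi> i) (\<phi> i))"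

definition rid :: "('v, 'e) rep \<Rightarrow> 'v rmor" where
  "rid R = (\<lambda>i x. if x \<in> fst R i then Some x else None)"

definition rzero :: "'v rmor" where
  "rzero = (\<lambda>i x. None)"

definition rep_iso :: "('v, 'e) quiver \<Rightarrow> ('v, 'e) rep \<Rightarrow> ('v, 'e) rep \<Rightarrow> 'v rmor \<Rightarrow> bool" where
  "rep_iso Q R S \<phi> \<longleftrightarrow> rep_mor Q R S \<phi> \<and>
     (\<exists>\<phi>'. rep_mor Q S R \<phi>' \<and> rcomp \<phi>' \<phi> = rid R \<and> rcomp \<phi> \<phi>' = rid S)"

definition risom :: "('v, 'e) quiver \<Rightarrow> ('v, 'e) rep \<Rightarrow> ('v, 'e) rep \<Rightarrow> bool" where
  "risom Q R S \<longleftrightarrow> (\<exists>\<phi>. rep_iso Q R S \<phi>)"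

text \<open>Inflations: pointwise injective morphisms.\<close>
definition inflation :: "('v, 'e) quiver \<Rightarrow> ('v, 'e) rep \<Rightarrow> ('v, 'e) rep \<Rightarrow> 'v rmor \<Rightarrow> bool" where
  "inflation Q R S \<phi> \<longleftrightarrow> rep_mor Q R S \<phi> \<and> (\<forall>i. dom (\<phi> i) = fst R i)"

definition sum_map :: "(nat \<rightharpoonup> nat) \<Rightarrow> (nat \<rightharpoonup> nat) \<Rightarrow> (nat \<rightharpoonup> nat)" where
  "sum_map f g = (\<lambda>x. if even x then map_option (\<lambda>n. 2 * n) (f (x div 2))
                      else map_option (\<lambda>n. 2 * n + 1) (g (x div 2)))"

definition rsum :: "('v, 'e) rep \<Rightarrow> ('v, 'e) rep \<Rightarrow> ('v, 'e) rep" where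
  "rsum R S = (\<lambda>i. (\<lambda>n. 2 * n) ` fst R i \<union> (\<lambda>n. 2 * n + 1) ` fst S i,
               \<lambda>a. sum_map (snd R a) (snd S a))"

definition msum :: "'v rmor \<Rightarrow> 'v rmor \<Rightarrow> 'v rmor" where
  "msum \<phi> \<psi> = (\<lambda>i. sum_map (\<phi> i) (\<psi> i))"

definition dual_obj :: "('v, 'e) quiver \<Rightarrow> ('v, 'e) rep \<Rightarrow> ('v, 'e) rep" where
  "dual_obj Q R = (\<lambda>i. fst R (sv Q i), \<lambda>a. transp (snd R (se Q a)))"

definition dual_mor :: "('v, 'e) quiver \<Rightarrow> 'v rmor \<Rightarrow> 'v rmor" where
  "dual_mor Q \<phi> = (\<lambda>i. transp (\<phi> (sv Q i)))"

text \<open>Symmetric form: psi : N -> P(N) iso with P(psi) o Theta_N = psi, Theta_N = id.\<close>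
definition sym_form :: "('v, 'e) quiver \<Rightarrow> ('v, 'e) rep \<Rightarrow> 'v rmor \<Rightarrow> bool" where
  "sym_form Q N \<psi> \<longleftrightarrow> is_rep Q N \<and> rep_iso Q N (dual_obj Q N) \<psi> \<and>
     rcomp (dual_mor Q \<psi>) (rid N) = \<psi>"

definition is_kernel :: "('v, 'e) quiver \<Rightarrow> ('v, 'e) rep \<Rightarrow> 'v rmor \<Rightarrow> ('v, 'e) rep \<Rightarrow> 'v rmor \<Rightarrow> bool" where
  "is_kernel Q N \<phi> K k \<longleftrightarrow> is_rep Q K \<and> rep_mor Q K N k \<and> rcomp \<phi> k = rzero \<and>
     (\<forall>Z g. is_rep Q Z \<longrightarrow> rep_mor Q Z N g \<longrightarrow> rcomp \<phi> g = rzero \<longrightarrow>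
        (\<exists>!h. rep_mor Q Z K h \<and> rcomp k h = g))"

text \<open>Cokernel K/U of an inflation i : U >-> K: collapse the image of U to the basepoint.\<close>
definition quot :: "('v, 'e) quiver \<Rightarrow> ('v, 'e) rep \<Rightarrow> 'v rmor \<Rightarrow> ('v, 'e) rep" where
  "quot Q K i = (\<lambda>v. fst K v - ran (i v),
     \<lambda>a x. if x \<in> fst K (src Q a) - ran (i (src Q a)) then
              (case snd K a x of None \<Rightarrow> None
               | Some y \<Rightarrow> if y \<in> ran (i (tgt Q a)) then None else Some y)
            else None)"

definition quot_map :: "('v, 'e) rep \<Rightarrow> 'v rmor \<Rightarrow> 'v rmor" where
  "quot_map K i = (\<lambda>v x. if x \<in> fst K v - ran (i v) then Some x else None)"

text \<open>U^perp is a kernel of P(j) psi_N; j isotropic if P(j) psi_N j = 0 and U -> U^perp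
  is an inflation.\<close>
definition isotropic :: "('v, 'e) quiver \<Rightarrow> ('v, 'e) rep \<Rightarrow> 'v rmor \<Rightarrow> ('v, 'e) rep \<Rightarrow> 'v rmor \<Rightarrow> bool" where
  "isotropic Q N \<psi> U j \<longleftrightarrow> inflation Q U N j \<and>
     rcomp (dual_mor Q j) (rcomp \<psi> j) = rzero \<and>
     (\<exists>K k i. is_kernel Q N (rcomp (dual_mor Q j) \<psi>) K k \<and> rep_mor Q U K i \<and>
              rcomp k i = j \<and> inflation Q U K i)"

definition combinatorial :: "('v, 'e) quiver \<Rightarrow> bool" where
  "combinatorial Q \<longleftrightarrow> (\<forall>U X1 X2 j. is_rep Q U \<longrightarrow> is_rep Q X1 \<longrightarrow> is_rep Q X2 \<longrightarrow>
     inflation Q U (rsum X1 X2) j \<longrightarrow>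
     (\<exists>U1 U2 j1 j2 f. is_rep Q U1 \<and> is_rep Q U2 \<and> inflation Q U1 X1 j1 \<and>
        inflation Q U2 X2 j2 \<and> rep_iso Q U (rsum U1 U2) f \<and> j = rcomp (msum j1 j2) f))"

definition finite_direct_decomposition :: "('v, 'e) quiver \<Rightarrow> bool" where
  "finite_direct_decomposition Q \<longleftrightarrow> (\<forall>W. is_rep Q W \<longrightarrow>
     (\<exists>S. finite S \<and> (\<forall>(U, V) \<in> S. is_rep Q U \<and> is_rep Q V) \<and>
        (\<forall>U V. is_rep Q U \<longrightarrow> is_rep Q V \<longrightarrow> risom Q (rsum U V) W \<longrightarrow>
           (\<exists>(U', V') \<in> S. risom Q U U' \<and> risom Q V V'))))"

definition reduction_assumption :: "('v, 'e) quiver \<Rightarrow> bool" where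
  "reduction_assumption Q \<longleftrightarrow> (\<forall>N \<psi> U j K k i.
     sym_form Q N \<psi> \<longrightarrow> is_rep Q U \<longrightarrow> isotropic Q N \<psi> U j \<longrightarrow>
     is_kernel Q N (rcomp (dual_mor Q j) \<psi>) K k \<longrightarrow> rep_mor Q U K i \<longrightarrow> rcomp k i = j \<longrightarrow>
     (let Nq = quot Q K i; \<pi> = quot_map K i in
       (\<exists>\<psi>'. sym_form Q Nq \<psi>' \<and>
          rcomp (dual_mor Q k) (rcomp \<psi> k) = rcomp (dual_mor Q \<pi>) (rcomp \<psi>' \<pi>)) \<and>
       (\<forall>\<psi>1 \<psi>2. sym_form Q Nq \<psi>1 \<longrightarrow> sym_form Q Nq \<psi>2 \<longrightarrow>
          rcomp (dual_mor Q k) (rcomp \<psi> k) = rcomp (dual_mor Q \<pi>) (rcomp \<psi>1 \<pi>) \<longrightarrow>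
          rcomp (dual_mor Q k) (rcomp \<psi> k) = rcomp (dual_mor Q \<pi>) (rcomp \<psi>2 \<pi>) \<longrightarrow>
          (\<exists>\<phi>. rep_iso Q Nq Nq \<phi> \<and> rcomp (dual_mor Q \<phi>) (rcomp \<psi>2 \<phi>) = \<psi>1))))"

end

theory Submission
  imports Defs
begin

text \<open>Morphisms of \<open>F\<^sub>1\<close>-representations are partial injections, so an inflation is
  an isomorphism onto its image, a full subrepresentation on an arrow-closed family of
  subsets. The image of an inflation into \<open>X\<^sub>1 \<oplus> X\<^sub>2\<close> splits into its even and odd
  parts, which gives the combinatorial property; a decomposition \<open>U \<oplus> V \<cong> W\<close> is
  determined up to isomorphism by the subset of \<open>W\<close> occupied by \<open>U\<close>, and there are only
  finitely many such subsets. A symmetric form pairs the elements of \<open>N\<^sub>v\<close> with those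
  of \<open>N\<^bsub>\<sigma> v\<^esub>\<close>. The kernel \<open>U\<^sup>\<perp>\<close> consists of the elements whose partner avoids
  the image of \<open>U\<close>, and pulling the pairing back to \<open>U\<^sup>\<perp>\<close> yields a pairing defined
  exactly off \<open>U\<close>, i.e. a symmetric form on \<open>U\<^sup>\<perp>/U\<close>. Since the projection
  \<open>U\<^sup>\<perp> \<rightarrow> U\<^sup>\<perp>/U\<close> is a partial identity, this form is the only one compatible with
  \<open>\<psi>\<^sub>N\<close>, so the reduced form is unique even up to equality.\<close>

lemma kcomp_apply: "kcomp g f x = (case f x of None \<Rightarrow> None | Some y \<Rightarrow> g y)"
  by (cases "f x") (auto simp: kcomp_def)

lemma kcomp_Some: "kcomp g f x = Some z \<longleftrightarrow> (\<exists>y. f x = Some y \<and> g y = Some z)"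
  by (cases "f x") (auto simp: kcomp_def)

lemma kcomp_assoc: "kcomp h (kcomp g f) = kcomp (kcomp h g) f"
  by (rule ext) (simp add: kcomp_apply split: option.splits)

lemma rcomp_assoc: "rcomp h (rcomp g f) = rcomp (rcomp h g) f"
  by (simp add: rcomp_def kcomp_assoc)

lemma option_eqI: "(\<And>v. x = Some v \<longleftrightarrow> y = Some v) \<Longrightarrow> x = y"
  by (cases x; cases y) auto

lemma inj_on_dom_iff: "inj_on f (dom f) \<longleftrightarrow> (\<forall>x x' y. f x = Some y \<longrightarrow> f x' = Some y \<longrightarrow> x = x')"
  by (auto simp: inj_on_def dom_def)

lemma kcomp_restrict_Some_right: "dom f \<subseteq> A \<Longrightarrow> kcomp f (Some |` A) = f"
  by (rule ext) (metis domIff kcomp_apply option.simps(4,5) restrict_in restrict_out subsetD)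

lemma kcomp_restrict_Some_left: "ran f \<subseteq> A \<Longrightarrow> kcomp (Some |` A) f = f"
  by (rule ext) (auto simp: kcomp_apply restrict_map_def ran_def split: option.splits)

lemma kcomp_eq_restrict_Some:
  assumes "kcomp g f = Some |` A"
  shows "A \<subseteq> dom f" "A \<subseteq> ran g"
proof -
  have "\<exists>y. f x = Some y \<and> g y = Some x" if "x \<in> A" for x
    using fun_cong[OF assms, of x] that by (simp add: kcomp_Some)
  then show "A \<subseteq> dom f" "A \<subseteq> ran g"
    by (auto simp: ran_def)
qed

lemma ran_restrict_Some [simp]: "ran (Some |` A) = A"
  by (auto simp: ran_def restrict_map_def)

lemma f1_morI:
  assumes "\<And>x y. f x = Some y \<Longrightarrow> x \<in> V \<and> y \<in> W"
    and "\<And>x x' y. f x = Some y \<Longrightarrow> f x' = Some y \<Longrightarrow> x = x'"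
  shows "f1_mor V W f"
  using assms unfolding f1_mor_def inj_on_dom_iff by (auto simp: ran_def)

lemma f1_morD:
  assumes "f1_mor V W f"
  shows "f x = Some y \<Longrightarrow> x \<in> V" "f x = Some y \<Longrightarrow> y \<in> W"
    "f x = Some y \<Longrightarrow> f x' = Some y \<Longrightarrow> x = x'" "x \<notin> V \<Longrightarrow> f x = None"
    "inj_on f (dom f)"
  using assms unfolding f1_mor_def inj_on_dom_iff by (auto simp: ran_def)

lemma transp_Some:
  assumes "inj_on f (dom f)"
  shows "transp f w = Some v \<longleftrightarrow> f v = Some w"
proof -
  have "(THE v. f v = Some w) = u" if "f u = Some w" for u
    using assms that by (auto simp: inj_on_dom_iff)
  then show ?thesis
    by (auto simp: transp_def ran_def)
qed

lemma transp_None: "transp f w = None \<longleftrightarrow> w \<notin> ran f"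
  by (simp add: transp_def)

lemma f1_mor_transp: "f1_mor V W f \<Longrightarrow> f1_mor W V (transp f)"
  by (rule f1_morI) (auto simp: transp_Some f1_morD)

lemma kcomp_transp_left:
  "inj_on f (dom f) \<Longrightarrow> kcomp (transp f) f = Some |` dom f"
  by (rule ext) (auto simp: kcomp_apply restrict_map_def transp_Some split: option.splits)

lemma kcomp_transp_right:
  "inj_on f (dom f) \<Longrightarrow> kcomp f (transp f) = Some |` ran f"
  by (rule ext, rule option_eqI) (auto simp: kcomp_Some restrict_map_def transp_Some ran_def)

lemma inj_on_dom_kcomp:
  "inj_on f (dom f) \<Longrightarrow> inj_on g (dom g) \<Longrightarrow> inj_on (kcomp g f) (dom (kcomp g f))"
  unfolding inj_on_dom_iff kcomp_Some by metis

lemma transp_kcomp: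
  assumes "inj_on f (dom f)" "inj_on g (dom g)"
  shows "transp (kcomp g f) = kcomp (transp f) (transp g)"
  by (rule ext, rule option_eqI)
    (auto simp: transp_Some assms inj_on_dom_kcomp kcomp_Some)

lemma transp_restrict_Some: "transp (Some |` A) = Some |` A"
  by (rule ext, rule option_eqI)
    (auto simp: transp_Some inj_on_dom_iff restrict_map_def split: if_splits)

lemma mem_ran_factor:
  assumes "kcomp g f = h" "inj_on g (dom g)" "ran f \<subseteq> dom g" "g x = Some n"
  shows "x \<in> ran f \<longleftrightarrow> n \<in> ran h"
proof
  assume "x \<in> ran f"
  then obtain u where "f u = Some x" by (auto simp: ran_def)
  then have "kcomp g f u = Some n" using assms(4) by (simp add: kcomp_apply)
  then show "n \<in> ran h" unfolding assms(1) by (rule ranI)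
next
  assume "n \<in> ran h"
  then obtain u y where "f u = Some y" "g y = Some n"
    using assms(1) by (auto simp: ran_def kcomp_Some)
  moreover from this have "y = x"
    using assms(2,4) by (auto simp: inj_on_dom_iff)
  ultimately show "x \<in> ran f" by (auto simp: ran_def)
qed

lemma ran_kcomp_complement:
  assumes "inj_on h (dom h)" "ran f \<union> ran g = dom h" "ran f \<inter> ran g = {}"
  shows "ran (kcomp h g) = ran h - ran (kcomp h f)"
  using assms unfolding inj_on_dom_iff
  by (auto simp: ran_def kcomp_Some dom_def set_eq_iff) metis+

lemma is_repD:
  assumes "is_rep Q R"
  shows "f1_mor (fst R (src Q a)) (fst R (tgt Q a)) (snd R a)" "finite (fst R i)"
    "finite {i. fst R i \<noteq> {}}"
  using assms unfolding is_rep_def by auto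

lemma is_rep_arrow_dom_ran:
  assumes "is_rep Q R"
  shows "dom (snd R a) \<subseteq> fst R (src Q a)" "ran (snd R a) \<subseteq> fst R (tgt Q a)"
  using is_repD(1)[OF assms] by (auto simp: f1_mor_def)

lemma rep_morD:
  assumes "rep_mor Q R S \<phi>"
  shows "f1_mor (fst R i) (fst S i) (\<phi> i)"
    "kcomp (\<phi> (tgt Q a)) (snd R a) = kcomp (snd S a) (\<phi> (src Q a))"
  using assms unfolding rep_mor_def by auto

lemma rep_mor_dom_ran:
  assumes "rep_mor Q R S \<phi>"
  shows "dom (\<phi> i) \<subseteq> fst R i" "ran (\<phi> i) \<subseteq> fst S i"
  using rep_morD(1)[OF assms] by (auto simp: f1_mor_def)

lemma rid_eq: "rid R i = Some |` fst R i"
  by (simp add: rid_def restrict_map_def)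

lemma rep_mor_rcomp:
  assumes "rep_mor Q R S f" "rep_mor Q S T g"
  shows "rep_mor Q R T (rcomp g f)"
  unfolding rep_mor_def
proof (intro conjI allI)
  fix i show "f1_mor (fst R i) (fst T i) (rcomp g f i)"
    using f1_morD[OF rep_morD(1)[OF assms(1), of i]] f1_morD[OF rep_morD(1)[OF assms(2), of i]]
    by (intro f1_morI) (auto simp: rcomp_def kcomp_Some)
next
  fix a
  have "kcomp (rcomp g f (tgt Q a)) (snd R a) = kcomp (g (tgt Q a)) (kcomp (f (tgt Q a)) (snd R a))"
    by (simp add: rcomp_def kcomp_assoc)
  also have "\<dots> = kcomp (kcomp (g (tgt Q a)) (snd S a)) (f (src Q a))"
    by (simp only: rep_morD(2)[OF assms(1)] kcomp_assoc)
  also have "\<dots> = kcomp (snd T a) (rcomp g f (src Q a))"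
    by (simp only: rep_morD(2)[OF assms(2)] rcomp_def kcomp_assoc)
  finally show "kcomp (rcomp g f (tgt Q a)) (snd R a) = kcomp (snd T a) (rcomp g f (src Q a))" .
qed

lemma rep_mor_rid:
  assumes "is_rep Q R"
  shows "rep_mor Q R R (rid R)"
  unfolding rep_mor_def rid_eq
proof (intro conjI allI)
  show "f1_mor (fst R i) (fst R i) (Some |` fst R i)" for i
    by (rule f1_morI) (auto simp: restrict_map_def split: if_splits)
  show "kcomp (Some |` fst R (tgt Q a)) (snd R a) = kcomp (snd R a) (Some |` fst R (src Q a))" for a
    by (simp add: kcomp_restrict_Some_left kcomp_restrict_Some_right is_rep_arrow_dom_ran[OF assms])
qed

text \<open>The inverse is the pointwise transpose; it commutes with the arrows because both of its
  composites with \<open>\<phi>\<close> are identities.\<close>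

lemma rep_iso_iff:
  assumes R: "is_rep Q R" and S: "is_rep Q S"
  shows "rep_iso Q R S \<phi> \<longleftrightarrow> inflation Q R S \<phi> \<and> (\<forall>i. ran (\<phi> i) = fst S i)"
proof
  assume "rep_iso Q R S \<phi>"
  then obtain \<phi>' where \<phi>: "rep_mor Q R S \<phi>"
    and left: "rcomp \<phi>' \<phi> = rid R" and right: "rcomp \<phi> \<phi>' = rid S"
    unfolding rep_iso_def by blast
  have "fst R i \<subseteq> dom (\<phi> i)" "fst S i \<subseteq> ran (\<phi> i)" for i
    using kcomp_eq_restrict_Some fun_cong[OF left, of i] fun_cong[OF right, of i]
    by (simp_all add: rcomp_def rid_eq)
  moreover note rep_mor_dom_ran[OF \<phi>]
  ultimately show "inflation Q R S \<phi> \<and> (\<forall>i. ran (\<phi> i) = fst S i)"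
    using \<phi> by (simp add: inflation_def subset_antisym)
next
  assume "inflation Q R S \<phi> \<and> (\<forall>i. ran (\<phi> i) = fst S i)"
  then have \<phi>: "rep_mor Q R S \<phi>" and dom: "\<And>i. dom (\<phi> i) = fst R i"
    and ran: "\<And>i. ran (\<phi> i) = fst S i"
    by (auto simp: inflation_def)
  have inj: "inj_on (\<phi> i) (dom (\<phi> i))" for i using f1_morD(5)[OF rep_morD(1)[OF \<phi>]] .
  define \<phi>' where "\<phi>' = (\<lambda>i. transp (\<phi> i))"
  have left: "rcomp \<phi>' \<phi> = rid R" and right: "rcomp \<phi> \<phi>' = rid S"
    by (rule ext, simp add: rcomp_def \<phi>'_def kcomp_transp_left[OF inj]
        kcomp_transp_right[OF inj] dom ran rid_eq)+
  have "kcomp (\<phi>' (tgt Q a)) (snd S a) = kcomp (snd R a) (\<phi>' (src Q a))" for a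
  proof -
    have "kcomp (\<phi>' (tgt Q a)) (snd S a)
        = kcomp (\<phi>' (tgt Q a)) (kcomp (snd S a) (kcomp (\<phi> (src Q a)) (\<phi>' (src Q a))))"
      using fun_cong[OF right, of "src Q a"]
      by (simp add: rcomp_def rid_eq kcomp_restrict_Some_right is_rep_arrow_dom_ran[OF S])
    also have "\<dots> = kcomp (kcomp (\<phi>' (tgt Q a)) (\<phi> (tgt Q a))) (kcomp (snd R a) (\<phi>' (src Q a)))"
      by (simp only: kcomp_assoc rep_morD(2)[OF \<phi>, symmetric])
    also have "\<dots> = kcomp (snd R a) (\<phi>' (src Q a))"
      using fun_cong[OF left, of "tgt Q a"]
      by (simp add: rcomp_def rid_eq kcomp_assoc kcomp_restrict_Some_left is_rep_arrow_dom_ran[OF R])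
    finally show ?thesis .
  qed
  then have "rep_mor Q S R \<phi>'"
    using f1_mor_transp[OF rep_morD(1)[OF \<phi>]] by (simp add: rep_mor_def \<phi>'_def)
  then show "rep_iso Q R S \<phi>"
    using \<phi> left right by (auto simp: rep_iso_def)
qed

lemma rep_iso_rid: "is_rep Q R \<Longrightarrow> rep_iso Q R R (rid R)"
  by (simp add: rep_iso_iff inflation_def rep_mor_rid rid_eq)

section \<open>Full subrepresentations\<close>

definition restrict_rep :: "('v, 'e) quiver \<Rightarrow> ('v, 'e) rep \<Rightarrow> ('v \<Rightarrow> nat set) \<Rightarrow> ('v, 'e) rep" where
  "restrict_rep Q W T =
     (T, \<lambda>a. kcomp (Some |` T (tgt Q a)) (kcomp (snd W a) (Some |` T (src Q a))))"

definition incl :: "('v \<Rightarrow> nat set) \<Rightarrow> 'v rmor" where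
  "incl T = (\<lambda>v. Some |` T v)"

definition closed_under_arrows :: "('v, 'e) quiver \<Rightarrow> ('v, 'e) rep \<Rightarrow> ('v \<Rightarrow> nat set) \<Rightarrow> bool" where
  "closed_under_arrows Q W T \<longleftrightarrow>
     (\<forall>a x y. x \<in> T (src Q a) \<longrightarrow> snd W a x = Some y \<longrightarrow> y \<in> T (tgt Q a))"

lemma fst_restrict_rep [simp]: "fst (restrict_rep Q W T) = T"
  by (simp add: restrict_rep_def)

lemma snd_restrict_rep_Some:
  "snd (restrict_rep Q W T) a x = Some y \<longleftrightarrow>
     x \<in> T (src Q a) \<and> snd W a x = Some y \<and> y \<in> T (tgt Q a)"
  by (auto simp: restrict_rep_def kcomp_Some restrict_map_def)

lemma incl_Some: "incl T v x = Some y \<longleftrightarrow> x \<in> T v \<and> y = x"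
  by (auto simp: incl_def restrict_map_def)

lemma rid_eq_incl: "rid R = incl (fst R)"
  by (simp add: rid_def incl_def restrict_map_def)

lemma is_rep_restrict_rep:
  assumes W: "is_rep Q W" and T: "\<And>i. T i \<subseteq> fst W i"
  shows "is_rep Q (restrict_rep Q W T)"
  unfolding is_rep_def fst_restrict_rep
proof (intro conjI allI)
  show "finite {i. T i \<noteq> {}}"
    by (rule rev_finite_subset[OF is_repD(3)[OF W]]) (use T in blast)
  show "finite (T i)" for i using is_repD(2)[OF W] T by (rule finite_subset[rotated])
  show "f1_mor (T (src Q a)) (T (tgt Q a)) (snd (restrict_rep Q W T) a)" for a
    using f1_morD(3)[OF is_repD(1)[OF W]]
    by (intro f1_morI) (auto simp: snd_restrict_rep_Some)
qed

lemma restrict_rep_self: "is_rep Q W \<Longrightarrow> restrict_rep Q W (fst W) = W"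
  by (simp add: restrict_rep_def kcomp_restrict_Some_left kcomp_restrict_Some_right
      is_rep_arrow_dom_ran prod_eq_iff)

lemma quot_eq_restrict_rep:
  assumes "is_rep Q K"
  shows "quot Q K i = restrict_rep Q K (\<lambda>v. fst K v - ran (i v))"
proof (rule prod_eqI)
  show "snd (quot Q K i) = snd (restrict_rep Q K (\<lambda>v. fst K v - ran (i v)))"
    using f1_morD(2)[OF is_repD(1)[OF assms]]
    by (intro ext option_eqI) (auto simp: quot_def snd_restrict_rep_Some split: option.splits)
qed (simp add: quot_def)

lemma quot_map_eq_incl: "quot_map K i = incl (\<lambda>v. fst K v - ran (i v))"
  by (simp add: quot_map_def incl_def restrict_map_def)

lemma rep_mor_restrict_rep:
  assumes \<phi>: "rep_mor Q K M \<phi>" and supp: "\<And>v x y. \<phi> v x = Some y \<Longrightarrow> x \<in> D v \<and> y \<in> D' v"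
  shows "rep_mor Q (restrict_rep Q K D) (restrict_rep Q M D') \<phi>"
  unfolding rep_mor_def
proof (intro conjI allI)
  show "f1_mor (fst (restrict_rep Q K D) v) (fst (restrict_rep Q M D') v) (\<phi> v)" for v
  proof (rule f1_morI)
    show "x \<in> fst (restrict_rep Q K D) v \<and> y \<in> fst (restrict_rep Q M D') v"
      if "\<phi> v x = Some y" for x y
      using supp[OF that] by simp
    show "x = x'" if "\<phi> v x = Some y" "\<phi> v x' = Some y" for x x' y
      using f1_morD(3)[OF rep_morD(1)[OF \<phi>]] that .
  qed
  fix a
  have dom: "dom (\<phi> v) \<subseteq> D v" and ran: "ran (\<phi> v) \<subseteq> D' v" for v
    using supp by (auto simp: ran_def)
  have "kcomp (\<phi> (tgt Q a)) (snd (restrict_rep Q K D) a)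
      = kcomp (kcomp (\<phi> (tgt Q a)) (snd K a)) (Some |` D (src Q a))"
    by (simp add: restrict_rep_def kcomp_assoc kcomp_restrict_Some_right[OF dom])
  also have "\<dots> = kcomp (snd M a) (\<phi> (src Q a))"
    by (simp only: rep_morD(2)[OF \<phi>] kcomp_assoc[symmetric] kcomp_restrict_Some_right[OF dom])
  also have "\<dots> = kcomp (Some |` D' (tgt Q a)) (kcomp (\<phi> (tgt Q a)) (snd K a))"
    by (simp only: rep_morD(2)[OF \<phi>, symmetric] kcomp_assoc kcomp_restrict_Some_left[OF ran])
  also have "\<dots> = kcomp (snd (restrict_rep Q M D') a) (\<phi> (src Q a))"
    by (simp only: restrict_rep_def snd_conv rep_morD(2)[OF \<phi>] kcomp_assoc[symmetric]
        kcomp_restrict_Some_left[OF ran])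
  finally show "kcomp (\<phi> (tgt Q a)) (snd (restrict_rep Q K D) a)
      = kcomp (snd (restrict_rep Q M D') a) (\<phi> (src Q a))" .
qed

lemma inflation_incl:
  assumes "\<And>i. T i \<subseteq> fst X i" and "closed_under_arrows Q X T"
  shows "inflation Q (restrict_rep Q X T) X (incl T)"
  unfolding inflation_def rep_mor_def
proof (intro conjI allI)
  show "f1_mor (fst (restrict_rep Q X T) i) (fst X i) (incl T i)" for i
    using assms(1) by (intro f1_morI) (auto simp: incl_Some)
  show "kcomp (incl T (tgt Q a)) (snd (restrict_rep Q X T) a) = kcomp (snd X a) (incl T (src Q a))" for a
    by (rule ext, rule option_eqI) (use assms(2) in
      \<open>auto simp: kcomp_Some incl_Some snd_restrict_rep_Some closed_under_arrows_def\<close>)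
  show "dom (incl T i) = fst (restrict_rep Q X T) i" for i
    by (simp add: incl_def)
qed

lemma rcomp_incl_left: "(\<And>i. ran (j i) \<subseteq> T i) \<Longrightarrow> rcomp (incl T) j = j"
  by (simp add: rcomp_def incl_def kcomp_restrict_Some_left)

lemma closed_under_arrows_ran:
  assumes "rep_mor Q U X j"
  shows "closed_under_arrows Q X (\<lambda>i. ran (j i))"
  unfolding closed_under_arrows_def
proof (intro allI impI)
  fix a x y
  assume "x \<in> ran (j (src Q a))" and "snd X a x = Some y"
  then obtain u where "kcomp (snd X a) (j (src Q a)) u = Some y"
    by (auto simp: ran_def kcomp_Some)
  then have "kcomp (j (tgt Q a)) (snd U a) u = Some y"
    using rep_morD(2)[OF assms, of a] by simp
  then show "y \<in> ran (j (tgt Q a))"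
    by (auto simp: kcomp_Some ran_def)
qed

lemma rep_iso_image:
  assumes U: "is_rep Q U" and X: "is_rep Q X" and j: "inflation Q U X j"
  shows "rep_iso Q U (restrict_rep Q X (\<lambda>i. ran (j i))) j"
proof -
  have jm: "rep_mor Q U X j" and dom: "\<And>i. dom (j i) = fst U i"
    using j by (auto simp: inflation_def)
  have ran_sub: "ran (j i) \<subseteq> fst X i" for i
    by (rule rep_mor_dom_ran(2)[OF jm])
  have "rep_mor Q (restrict_rep Q U (fst U)) (restrict_rep Q X (\<lambda>i. ran (j i))) j"
    using f1_morD(1)[OF rep_morD(1)[OF jm]] by (intro rep_mor_restrict_rep[OF jm]) (auto simp: ran_def)
  then have "rep_mor Q U (restrict_rep Q X (\<lambda>i. ran (j i))) j"
    by (simp add: restrict_rep_self[OF U])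
  then show ?thesis
    using dom by (simp add: rep_iso_iff[OF U is_rep_restrict_rep[OF X ran_sub]] inflation_def)
qed

section \<open>Direct sums\<close>

lemma double_neq_Suc_double [simp]:
  fixes a b :: nat
  shows "2 * a \<noteq> Suc (2 * b)" "Suc (2 * a) \<noteq> 2 * b"
  by presburger+

lemma sum_map_Some:
  "sum_map f g x = Some y \<longleftrightarrow>
     (\<exists>n m. x = 2 * n \<and> y = 2 * m \<and> f n = Some m) \<or>
     (\<exists>n m. x = 2 * n + 1 \<and> y = 2 * m + 1 \<and> g n = Some m)"
  by (cases "even x") (auto simp: sum_map_def elim!: evenE oddE)

lemma sum_map_double [simp]: "sum_map f g (2 * n) = map_option (\<lambda>n. 2 * n) (f n)"
  by (simp add: sum_map_def)

lemma sum_map_Suc_double [simp]: "sum_map f g (Suc (2 * n)) = map_option (\<lambda>n. 2 * n + 1) (g n)"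
  by (simp add: sum_map_def)

lemma fst_rsum: "fst (rsum R S) i = (\<lambda>n. 2 * n) ` fst R i \<union> (\<lambda>n. 2 * n + 1) ` fst S i"
  by (simp add: rsum_def)

lemma snd_rsum: "snd (rsum R S) a = sum_map (snd R a) (snd S a)"
  by (simp add: rsum_def)

lemma nat_even_odd_image_split:
  "(A :: nat set) = (\<lambda>n. 2 * n) ` {n. 2 * n \<in> A} \<union> (\<lambda>n. 2 * n + 1) ` {n. 2 * n + 1 \<in> A}"
proof (rule set_eqI)
  fix x :: nat
  show "x \<in> A \<longleftrightarrow> x \<in> (\<lambda>n. 2 * n) ` {n. 2 * n \<in> A} \<union> (\<lambda>n. 2 * n + 1) ` {n. 2 * n + 1 \<in> A}"
    by (cases "even x") (auto simp: image_iff elim!: evenE oddE)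
qed

lemma mem_fst_rsum [simp]:
  "2 * n \<in> fst (rsum R S) i \<longleftrightarrow> n \<in> fst R i"
  "Suc (2 * n) \<in> fst (rsum R S) i \<longleftrightarrow> n \<in> fst S i"
  by (auto simp: fst_rsum)

lemma is_rep_rsum:
  assumes R: "is_rep Q R" and S: "is_rep Q S"
  shows "is_rep Q (rsum R S)"
  unfolding is_rep_def
proof (intro conjI allI)
  have "{i. fst (rsum R S) i \<noteq> {}} \<subseteq> {i. fst R i \<noteq> {}} \<union> {i. fst S i \<noteq> {}}"
    by (auto simp: fst_rsum)
  then show "finite {i. fst (rsum R S) i \<noteq> {}}"
    using is_repD(3)[OF R] is_repD(3)[OF S] by (auto intro: finite_subset)
  show "finite (fst (rsum R S) i)" for i
    using is_repD(2)[OF R] is_repD(2)[OF S] by (simp add: fst_rsum)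
  show "f1_mor (fst (rsum R S) (src Q a)) (fst (rsum R S) (tgt Q a)) (snd (rsum R S) a)" for a
    using f1_morD[OF is_repD(1)[OF R, of a]] f1_morD[OF is_repD(1)[OF S, of a]]
    by (intro f1_morI) (auto simp: fst_rsum snd_rsum sum_map_Some)
qed

lemma restrict_rep_rsum:
  "restrict_rep Q (rsum X1 X2) T
     = rsum (restrict_rep Q X1 (\<lambda>i. {n. 2 * n \<in> T i})) (restrict_rep Q X2 (\<lambda>i. {n. 2 * n + 1 \<in> T i}))"
proof (rule prod_eqI)
  show "fst (restrict_rep Q (rsum X1 X2) T)
      = fst (rsum (restrict_rep Q X1 (\<lambda>i. {n. 2 * n \<in> T i})) (restrict_rep Q X2 (\<lambda>i. {n. 2 * n + 1 \<in> T i})))"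
    unfolding fst_rsum fst_restrict_rep by (intro ext) (rule nat_even_odd_image_split)
  show "snd (restrict_rep Q (rsum X1 X2) T)
      = snd (rsum (restrict_rep Q X1 (\<lambda>i. {n. 2 * n \<in> T i})) (restrict_rep Q X2 (\<lambda>i. {n. 2 * n + 1 \<in> T i})))"
    by (intro ext option_eqI) (auto simp: snd_restrict_rep_Some snd_rsum sum_map_Some)
qed

lemma incl_eq_msum: "incl T = msum (incl (\<lambda>i. {n. 2 * n \<in> T i})) (incl (\<lambda>i. {n. 2 * n + 1 \<in> T i}))"
proof (intro ext option_eqI)
  fix i x y
  show "incl T i x = Some y \<longleftrightarrow>
      msum (incl (\<lambda>i. {n. 2 * n \<in> T i})) (incl (\<lambda>i. {n. 2 * n + 1 \<in> T i})) i x = Some y"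
    by (cases "even x") (auto simp: msum_def sum_map_Some incl_Some elim!: evenE oddE)
qed

lemma rsum_components_subset:
  assumes "T \<subseteq> fst (rsum X1 X2) i"
  shows "{n. 2 * n \<in> T} \<subseteq> fst X1 i" and "{n. 2 * n + 1 \<in> T} \<subseteq> fst X2 i"
  using assms mem_fst_rsum[of _ X1 X2 i] by auto

lemma closed_under_arrows_rsum:
  assumes "closed_under_arrows Q (rsum X1 X2) T"
  shows "closed_under_arrows Q X1 (\<lambda>i. {n. 2 * n \<in> T i})"
    and "closed_under_arrows Q X2 (\<lambda>i. {n. 2 * n + 1 \<in> T i})"
  using assms[unfolded closed_under_arrows_def, rule_format]
  by (auto simp: closed_under_arrows_def snd_rsum sum_map_def)

text \<open>The summands are the even and odd parts of the image of \<open>j\<close>.\<close>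

lemma Rep_combinatorial: "combinatorial Q"
  unfolding combinatorial_def
proof (intro allI impI)
  fix U X1 X2 j
  assume U: "is_rep Q U" and X1: "is_rep Q X1" and X2: "is_rep Q X2"
    and j: "inflation Q U (rsum X1 X2) j"
  define T where "T i = ran (j i)" for i
  define A1 where "A1 i = {n. 2 * n \<in> T i}" for i
  define A2 where "A2 i = {n. 2 * n + 1 \<in> T i}" for i
  have jm: "rep_mor Q U (rsum X1 X2) j"
    using j by (simp add: inflation_def)
  have "T i \<subseteq> fst (rsum X1 X2) i" for i
    unfolding T_def by (rule rep_mor_dom_ran(2)[OF jm])
  then have A1: "A1 i \<subseteq> fst X1 i" and A2: "A2 i \<subseteq> fst X2 i" for i
    unfolding A1_def A2_def by (rule rsum_components_subset)+
  have closed: "closed_under_arrows Q (rsum X1 X2) T"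
    unfolding T_def by (rule closed_under_arrows_ran[OF jm])
  have "rep_iso Q U (restrict_rep Q (rsum X1 X2) T) j"
    unfolding T_def by (rule rep_iso_image[OF U is_rep_rsum[OF X1 X2] j])
  then have "rep_iso Q U (rsum (restrict_rep Q X1 A1) (restrict_rep Q X2 A2)) j"
    unfolding A1_def A2_def restrict_rep_rsum[symmetric] .
  moreover have "inflation Q (restrict_rep Q X1 A1) X1 (incl A1)"
    by (rule inflation_incl[OF A1 closed_under_arrows_rsum(1)[OF closed, folded A1_def]])
  moreover have "inflation Q (restrict_rep Q X2 A2) X2 (incl A2)"
    by (rule inflation_incl[OF A2 closed_under_arrows_rsum(2)[OF closed, folded A2_def]])
  moreover have "j = rcomp (msum (incl A1) (incl A2)) j"
    unfolding A1_def A2_def incl_eq_msum[symmetric] by (simp add: rcomp_incl_left T_def)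
  ultimately show "\<exists>U1 U2 j1 j2 f. is_rep Q U1 \<and> is_rep Q U2 \<and> inflation Q U1 X1 j1 \<and>
      inflation Q U2 X2 j2 \<and> rep_iso Q U (rsum U1 U2) f \<and> j = rcomp (msum j1 j2) f"
    using is_rep_restrict_rep[OF X1 A1] is_rep_restrict_rep[OF X2 A2] by blast
qed

definition sum_inl :: "('v, 'e) rep \<Rightarrow> 'v rmor" where
  "sum_inl U = (\<lambda>i. (\<lambda>x. Some (2 * x)) |` fst U i)"

definition sum_inr :: "('v, 'e) rep \<Rightarrow> 'v rmor" where
  "sum_inr V = (\<lambda>i. (\<lambda>x. Some (2 * x + 1)) |` fst V i)"

lemma ran_sum_inl: "ran (sum_inl U i) = (\<lambda>n. 2 * n) ` fst U i"
  by (auto simp: sum_inl_def ran_def restrict_map_def)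

lemma ran_sum_inr: "ran (sum_inr V i) = (\<lambda>n. 2 * n + 1) ` fst V i"
  by (auto simp: sum_inr_def ran_def restrict_map_def)

lemma inflation_sum_inl:
  assumes "is_rep Q U"
  shows "inflation Q U (rsum U V) (sum_inl U)"
  unfolding inflation_def rep_mor_def
proof (intro conjI allI)
  show "f1_mor (fst U i) (fst (rsum U V) i) (sum_inl U i)" for i
    by (intro f1_morI) (auto simp: sum_inl_def restrict_map_def split: if_splits)
  show "kcomp (sum_inl U (tgt Q a)) (snd U a) = kcomp (snd (rsum U V) a) (sum_inl U (src Q a))" for a
    using f1_morD(1,2)[OF is_repD(1)[OF assms, of a]]
    by (intro ext) (auto simp: kcomp_apply sum_inl_def restrict_map_def snd_rsum split: option.splits)
  show "dom (sum_inl U i) = fst U i" for i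
    by (simp add: sum_inl_def)
qed

lemma inflation_sum_inr:
  assumes "is_rep Q V"
  shows "inflation Q V (rsum U V) (sum_inr V)"
  unfolding inflation_def rep_mor_def
proof (intro conjI allI)
  show "f1_mor (fst V i) (fst (rsum U V) i) (sum_inr V i)" for i
    by (intro f1_morI) (auto simp: sum_inr_def restrict_map_def split: if_splits)
  show "kcomp (sum_inr V (tgt Q a)) (snd V a) = kcomp (snd (rsum U V) a) (sum_inr V (src Q a))" for a
    using f1_morD(1,2)[OF is_repD(1)[OF assms, of a]]
    by (intro ext) (auto simp: kcomp_apply sum_inr_def restrict_map_def snd_rsum split: option.splits)
  show "dom (sum_inr V i) = fst V i" for i
    by (simp add: sum_inr_def)
qed

lemma inflation_rcomp:
  assumes f: "inflation Q R S f" and g: "inflation Q S T g"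
  shows "inflation Q R T (rcomp g f)"
proof -
  have fm: "rep_mor Q R S f" and df: "\<And>i. dom (f i) = fst R i"
    and gm: "rep_mor Q S T g" and dg: "\<And>i. dom (g i) = fst S i"
    using f g by (auto simp: inflation_def)
  have "dom (kcomp (g i) (f i)) = fst R i" for i
  proof
    show "dom (kcomp (g i) (f i)) \<subseteq> fst R i"
      by (auto simp: kcomp_Some simp flip: df)
    show "fst R i \<subseteq> dom (kcomp (g i) (f i))"
    proof
      fix x assume "x \<in> fst R i"
      then obtain y where y: "f i x = Some y" using df by blast
      then have "y \<in> dom (g i)" using f1_morD(2)[OF rep_morD(1)[OF fm]] dg by blast
      then show "x \<in> dom (kcomp (g i) (f i))" using y by (auto simp: kcomp_Some)
    qed
  qed
  then show ?thesis
    using rep_mor_rcomp[OF fm gm] by (simp add: inflation_def rcomp_def)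
qed

lemma ran_iso_sum_inr:
  assumes U: "is_rep Q U" and V: "is_rep Q V" and W: "is_rep Q W"
    and iso: "rep_iso Q (rsum U V) W \<phi>"
  shows "ran (rcomp \<phi> (sum_inr V) i) = fst W i - ran (rcomp \<phi> (sum_inl U) i)"
proof -
  have \<phi>: "rep_mor Q (rsum U V) W \<phi>" and dom: "dom (\<phi> i) = fst (rsum U V) i"
    and ran: "ran (\<phi> i) = fst W i"
    using iso rep_iso_iff[OF is_rep_rsum[OF U V] W] by (auto simp: inflation_def)
  have "ran (sum_inl U i) \<union> ran (sum_inr V i) = dom (\<phi> i)"
    by (simp add: dom ran_sum_inl ran_sum_inr fst_rsum)
  moreover have "ran (sum_inl U i) \<inter> ran (sum_inr V i) = {}"
    by (auto simp: ran_sum_inl ran_sum_inr)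
  ultimately show ?thesis
    using ran_kcomp_complement[OF f1_morD(5)[OF rep_morD(1)[OF \<phi>]]] ran
    by (simp add: rcomp_def)
qed

lemma rsum_iso_split:
  assumes U: "is_rep Q U" and V: "is_rep Q V" and W: "is_rep Q W"
    and "risom Q (rsum U V) W"
  obtains T where "\<And>i. T i \<subseteq> fst W i" "risom Q U (restrict_rep Q W T)"
    "risom Q V (restrict_rep Q W (\<lambda>i. fst W i - T i))"
proof -
  obtain \<phi> where iso: "rep_iso Q (rsum U V) W \<phi>"
    using assms(4) by (auto simp: risom_def)
  then have \<phi>: "inflation Q (rsum U V) W \<phi>"
    using rep_iso_iff[OF is_rep_rsum[OF U V] W] by auto
  define \<alpha> where "\<alpha> = rcomp \<phi> (sum_inl U)"
  define \<beta> where "\<beta> = rcomp \<phi> (sum_inr V)"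
  have \<alpha>: "inflation Q U W \<alpha>" and \<beta>: "inflation Q V W \<beta>"
    unfolding \<alpha>_def \<beta>_def
    by (rule inflation_rcomp[OF inflation_sum_inl[OF U] \<phi>] inflation_rcomp[OF inflation_sum_inr[OF V] \<phi>])+
  have "ran (\<alpha> i) \<subseteq> fst W i" for i
    using rep_mor_dom_ran(2)[of Q U W \<alpha>] \<alpha> by (simp add: inflation_def)
  moreover have "risom Q U (restrict_rep Q W (\<lambda>i. ran (\<alpha> i)))"
    using rep_iso_image[OF U W \<alpha>] by (auto simp: risom_def)
  moreover have "risom Q V (restrict_rep Q W (\<lambda>i. fst W i - ran (\<alpha> i)))"
    using rep_iso_image[OF V W \<beta>] ran_iso_sum_inr[OF U V W iso]
    by (auto simp: risom_def \<alpha>_def \<beta>_def)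
  ultimately show ?thesis
    by (rule that)
qed

lemma finite_families_below:
  assumes W: "is_rep Q W"
  shows "finite {T. \<forall>i. T i \<subseteq> fst W i}"
proof -
  define I where "I = {i. fst W i \<noteq> {}}"
  have "finite (Pow (\<Union>i\<in>I. fst W i))"
    using is_repD(2,3)[OF W] by (simp add: I_def)
  then have "finite {T. \<forall>i. (i \<in> I \<longrightarrow> T i \<in> Pow (\<Union>i\<in>I. fst W i)) \<and> (i \<notin> I \<longrightarrow> T i = {})}"
    using is_repD(3)[OF W] by (intro finite_set_of_finite_funs) (simp_all add: I_def)
  moreover have "{T. \<forall>i. T i \<subseteq> fst W i}
      \<subseteq> {T. \<forall>i. (i \<in> I \<longrightarrow> T i \<in> Pow (\<Union>i\<in>I. fst W i)) \<and> (i \<notin> I \<longrightarrow> T i = {})}"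
    unfolding I_def by blast
  ultimately show ?thesis
    by (rule finite_subset[rotated])
qed

lemma Rep_finite_direct_decomposition: "finite_direct_decomposition Q"
  unfolding finite_direct_decomposition_def
proof (intro allI impI)
  fix W assume W: "is_rep Q W"
  define S where "S = (\<lambda>T. (restrict_rep Q W T, restrict_rep Q W (\<lambda>i. fst W i - T i))) `
    {T. \<forall>i. T i \<subseteq> fst W i}"
  have "finite S"
    unfolding S_def using finite_families_below[OF W] by simp
  moreover have "\<forall>(U, V) \<in> S. is_rep Q U \<and> is_rep Q V"
    unfolding S_def by (auto intro!: is_rep_restrict_rep[OF W])
  moreover have "\<exists>(U', V') \<in> S. risom Q U U' \<and> risom Q V V'"
    if U: "is_rep Q U" and V: "is_rep Q V" and iso: "risom Q (rsum U V) W" for U V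
  proof -
    obtain T where "\<And>i. T i \<subseteq> fst W i" "risom Q U (restrict_rep Q W T)"
      "risom Q V (restrict_rep Q W (\<lambda>i. fst W i - T i))"
      using rsum_iso_split[OF U V W iso] by blast
    then show ?thesis unfolding S_def by blast
  qed
  ultimately show "\<exists>S. finite S \<and> (\<forall>(U, V) \<in> S. is_rep Q U \<and> is_rep Q V) \<and>
      (\<forall>U V. is_rep Q U \<longrightarrow> is_rep Q V \<longrightarrow> risom Q (rsum U V) W \<longrightarrow>
         (\<exists>(U', V') \<in> S. risom Q U U' \<and> risom Q V V'))"
    by blast
qed

lemma quiver_invD:
  assumes "quiver_inv Q"
  shows "sv Q (sv Q v) = v" "src Q (se Q a) = sv Q (tgt Q a)" "tgt Q (se Q a) = sv Q (src Q a)"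
  using assms unfolding quiver_inv_def by (auto simp: fun_eq_iff)

lemma fst_dual_obj [simp]: "fst (dual_obj Q R) v = fst R (sv Q v)"
  by (simp add: dual_obj_def)

lemma snd_dual_obj [simp]: "snd (dual_obj Q R) a = transp (snd R (se Q a))"
  by (simp add: dual_obj_def)

lemma dual_mor_apply [simp]: "dual_mor Q \<phi> v = transp (\<phi> (sv Q v))"
  by (simp add: dual_mor_def)

lemma is_rep_dual_obj:
  assumes Q: "quiver_inv Q" and R: "is_rep Q R"
  shows "is_rep Q (dual_obj Q R)"
  unfolding is_rep_def
proof (intro conjI allI)
  have "inj (sv Q)"
    by (metis injI quiver_invD(1)[OF Q])
  then have "finite (sv Q -` {v. fst R v \<noteq> {}})"
    using is_repD(3)[OF R] by (rule finite_vimageI[rotated])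
  then show "finite {v. fst (dual_obj Q R) v \<noteq> {}}"
    by simp
  show "finite (fst (dual_obj Q R) v)" for v
    using is_repD(2)[OF R] by simp
  show "f1_mor (fst (dual_obj Q R) (src Q a)) (fst (dual_obj Q R) (tgt Q a)) (snd (dual_obj Q R) a)" for a
    using f1_mor_transp[OF is_repD(1)[OF R, of "se Q a"]] by (simp add: quiver_invD[OF Q])
qed

lemma dual_rep_mor:
  assumes Q: "quiver_inv Q" and R: "is_rep Q R" and S: "is_rep Q S" and \<phi>: "rep_mor Q R S \<phi>"
  shows "rep_mor Q (dual_obj Q S) (dual_obj Q R) (dual_mor Q \<phi>)"
  unfolding rep_mor_def
proof (intro conjI allI)
  show "f1_mor (fst (dual_obj Q S) v) (fst (dual_obj Q R) v) (dual_mor Q \<phi> v)" for v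
    using f1_mor_transp[OF rep_morD(1)[OF \<phi>]] by simp
  fix a
  define b where "b = se Q a"
  have inj: "inj_on (\<phi> v) (dom (\<phi> v))" "inj_on (snd R b) (dom (snd R b))"
    "inj_on (snd S b) (dom (snd S b))" for v
    using f1_morD(5)[OF rep_morD(1)[OF \<phi>]] f1_morD(5)[OF is_repD(1)[OF R]]
      f1_morD(5)[OF is_repD(1)[OF S]] by blast+
  have "kcomp (transp (\<phi> (src Q b))) (transp (snd S b)) = transp (kcomp (snd S b) (\<phi> (src Q b)))"
    by (simp add: transp_kcomp inj)
  also have "\<dots> = transp (kcomp (\<phi> (tgt Q b)) (snd R b))"
    by (simp add: rep_morD(2)[OF \<phi>])
  also have "\<dots> = kcomp (transp (snd R b)) (transp (\<phi> (tgt Q b)))"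
    by (simp add: transp_kcomp inj)
  finally show "kcomp (dual_mor Q \<phi> (tgt Q a)) (snd (dual_obj Q S) a)
      = kcomp (snd (dual_obj Q R) a) (dual_mor Q \<phi> (src Q a))"
    by (simp add: b_def quiver_invD[OF Q])
qed

lemma restrict_rep_dual_obj:
  assumes Q: "quiver_inv Q" and K: "is_rep Q K"
  shows "dual_obj Q (restrict_rep Q K D) = restrict_rep Q (dual_obj Q K) (\<lambda>v. D (sv Q v))"
proof (rule prod_eqI)
  have inj: "inj_on (snd K b) (dom (snd K b))" for b
    using f1_morD(5)[OF is_repD(1)[OF K]] .
  have inj_restr: "inj_on (snd (restrict_rep Q K D) b) (dom (snd (restrict_rep Q K D) b))" for b
    using f1_morD(5)[OF is_repD(1)[OF K]] by (auto simp: inj_on_dom_iff snd_restrict_rep_Some)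
  show "snd (dual_obj Q (restrict_rep Q K D)) = snd (restrict_rep Q (dual_obj Q K) (\<lambda>v. D (sv Q v)))"
    by (intro ext option_eqI)
      (auto simp: transp_Some inj inj_restr snd_restrict_rep_Some quiver_invD[OF Q])
qed (simp add: fun_eq_iff)

section \<open>Symmetric forms\<close>

lemma sym_formD:
  assumes Q: "quiver_inv Q" and form: "sym_form Q N \<psi>"
  shows "is_rep Q N" and "rep_mor Q N (dual_obj Q N) \<psi>" and "dom (\<psi> v) = fst N v"
    and "\<psi> v n = Some m \<Longrightarrow> \<psi> (sv Q v) m = Some n"
proof -
  have N: "is_rep Q N" and iso: "rep_iso Q N (dual_obj Q N) \<psi>"
    and sym: "rcomp (dual_mor Q \<psi>) (rid N) = \<psi>"
    using form by (auto simp: sym_form_def)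
  then have \<psi>: "rep_mor Q N (dual_obj Q N) \<psi>" and dom: "\<And>v. dom (\<psi> v) = fst N v"
    using rep_iso_iff[OF N is_rep_dual_obj[OF Q N]] by (auto simp: inflation_def)
  show "is_rep Q N" "rep_mor Q N (dual_obj Q N) \<psi>" "dom (\<psi> v) = fst N v"
    by (fact N \<psi> dom)+
  assume "\<psi> v n = Some m"
  then have "transp (\<psi> (sv Q v)) n = Some m"
    using dom fun_cong[OF fun_cong[OF sym, of v], of n]
    by (auto simp: rcomp_def rid_eq kcomp_apply restrict_map_def split: if_splits)
  then show "\<psi> (sv Q v) m = Some n"
    by (simp add: transp_Some f1_morD(5)[OF rep_morD(1)[OF \<psi>]])
qed

lemma sym_formI:
  assumes Q: "quiver_inv Q" and N: "is_rep Q N" and \<psi>: "rep_mor Q N (dual_obj Q N) \<psi>"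
    and dom: "\<And>v. dom (\<psi> v) = fst N v"
    and sym: "\<And>v n m. \<psi> v n = Some m \<Longrightarrow> \<psi> (sv Q v) m = Some n"
  shows "sym_form Q N \<psi>"
proof -
  have sym_iff: "\<psi> (sv Q v) m = Some n \<longleftrightarrow> \<psi> v n = Some m" for v n m
    using sym[of "sv Q v" m n] sym[of v n m] by (auto simp: quiver_invD(1)[OF Q])
  have "ran (\<psi> v) = fst N (sv Q v)" for v
  proof
    show "ran (\<psi> v) \<subseteq> fst N (sv Q v)"
      using sym dom[of "sv Q v"] by (auto simp: ran_def)
    show "fst N (sv Q v) \<subseteq> ran (\<psi> v)"
      using sym_iff dom[of "sv Q v"] by (force simp: ran_def)
  qed
  then have "rep_iso Q N (dual_obj Q N) \<psi>"
    using \<psi> dom by (simp add: rep_iso_iff[OF N is_rep_dual_obj[OF Q N]] inflation_def)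
  moreover have "rcomp (dual_mor Q \<psi>) (rid N) v n = \<psi> v n" for v n
  proof (cases "n \<in> fst N v")
    case True
    have inj: "inj_on (\<psi> (sv Q v)) (dom (\<psi> (sv Q v)))"
      using f1_morD(5)[OF rep_morD(1)[OF \<psi>]] .
    from True show ?thesis
      by (intro option_eqI) (auto simp: rcomp_def rid_eq kcomp_Some transp_Some[OF inj] sym_iff)
  next
    case False
    then have "\<psi> v n = None" using dom[of v] by auto
    with False show ?thesis by (simp add: rcomp_def rid_eq kcomp_apply)
  qed
  ultimately show "sym_form Q N \<psi>"
    using N by (simp add: sym_form_def fun_eq_iff)
qed

lemma dual_incl_sandwich:
  assumes "\<And>v x y. \<psi> v x = Some y \<Longrightarrow> x \<in> D v \<and> y \<in> D (sv Q v)"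
  shows "rcomp (dual_mor Q (incl D)) (rcomp \<psi> (incl D)) = \<psi>"
proof (intro ext)
  fix v x
  show "rcomp (dual_mor Q (incl D)) (rcomp \<psi> (incl D)) v x = \<psi> v x"
    using assms[of v x] by (cases "x \<in> D v"; cases "\<psi> v x")
      (auto simp: rcomp_def incl_def kcomp_apply transp_restrict_Some)
qed

lemma dual_sandwich_Some:
  assumes "inj_on (k (sv Q v)) (dom (k (sv Q v)))"
  shows "rcomp (dual_mor Q k) (rcomp \<psi> k) v x = Some y \<longleftrightarrow>
    (\<exists>n m. k v x = Some n \<and> \<psi> v n = Some m \<and> k (sv Q v) y = Some m)"
  by (auto simp: rcomp_def kcomp_Some transp_Some[OF assms])

lemma closed_under_arrows_zeros:
  assumes N: "is_rep Q N" and \<phi>: "rep_mor Q N M \<phi>"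
  shows "closed_under_arrows Q N (\<lambda>v. {n \<in> fst N v. \<phi> v n = None})"
  unfolding closed_under_arrows_def
proof (intro allI impI)
  fix a x y
  assume x: "x \<in> {n \<in> fst N (src Q a). \<phi> (src Q a) n = None}" and xy: "snd N a x = Some y"
  then have "kcomp (\<phi> (tgt Q a)) (snd N a) x = None"
    using rep_morD(2)[OF \<phi>, of a] by (simp add: kcomp_apply)
  then show "y \<in> {n \<in> fst N (tgt Q a). \<phi> (tgt Q a) n = None}"
    using xy f1_morD(2)[OF is_repD(1)[OF N]] by (simp add: kcomp_apply)
qed

lemma rcomp_rid_right: "rep_mor Q R S \<phi> \<Longrightarrow> rcomp \<phi> (rid R) = \<phi>"
  using f1_morD(1)[OF rep_morD(1)]
  by (fastforce simp: rcomp_def rid_eq intro!: kcomp_restrict_Some_right)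

text \<open>Totality of \<open>k\<close> comes from the uniqueness in the universal property: if \<open>h\<close> factors
  the inclusion of the zero set of \<open>\<phi>\<close> through \<open>k\<close>, then \<open>rid K\<close> and \<open>h \<circ> k\<close> both
  solve \<open>k \<circ> _ = k\<close>.\<close>

lemma kernel_inflation:
  assumes N: "is_rep Q N" and \<phi>: "rep_mor Q N M \<phi>" and ker: "is_kernel Q N \<phi> K k"
  shows "inflation Q K N k" and "ran (k v) = {n \<in> fst N v. \<phi> v n = None}"
proof -
  define Z where "Z v = {n \<in> fst N v. \<phi> v n = None}" for v
  have K: "is_rep Q K" and k: "rep_mor Q K N k" and kz: "rcomp \<phi> k = rzero"
    and univ: "\<And>Y g. is_rep Q Y \<Longrightarrow> rep_mor Q Y N g \<Longrightarrow> rcomp \<phi> g = rzero \<Longrightarrow>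
        \<exists>!h. rep_mor Q Y K h \<and> rcomp k h = g"
    using ker unfolding is_kernel_def by blast+
  have Z_sub: "Z v \<subseteq> fst N v" for v
    by (auto simp: Z_def)
  have "inflation Q (restrict_rep Q N Z) N (incl Z)"
    by (rule inflation_incl[OF Z_sub closed_under_arrows_zeros[OF N \<phi>, folded Z_def]])
  moreover have "rcomp \<phi> (incl Z) = rzero"
    by (intro ext) (auto simp: rcomp_def incl_def kcomp_apply rzero_def restrict_map_def Z_def)
  ultimately obtain h where h: "rep_mor Q (restrict_rep Q N Z) K h" and kh: "rcomp k h = incl Z"
    using univ[OF is_rep_restrict_rep[OF N Z_sub]] unfolding inflation_def by blast
  have ran_k: "ran (k v) = Z v" for v
  proof
    show "Z v \<subseteq> ran (k v)"
      using kcomp_eq_restrict_Some(2) fun_cong[OF kh, of v] by (simp add: rcomp_def incl_def)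
    have "\<phi> v n = None" if "k v x = Some n" for x n
      using fun_cong[OF fun_cong[OF kz, of v], of x] that by (simp add: rcomp_def rzero_def kcomp_apply)
    then show "ran (k v) \<subseteq> Z v"
      using rep_mor_dom_ran(2)[OF k, of v] by (auto simp: Z_def ran_def)
  qed
  have "x \<in> fst K v \<and> y \<in> Z v" if "k v x = Some y" for v x y
    using that rep_mor_dom_ran(1)[OF k, of v] ran_k[of v] by (blast intro: domI ranI)
  then have "rep_mor Q (restrict_rep Q K (fst K)) (restrict_rep Q N Z) k"
    by (rule rep_mor_restrict_rep[OF k])
  then have "rep_mor Q K K (rcomp h k)"
    using rep_mor_rcomp h by (simp add: restrict_rep_self[OF K])
  moreover have "rcomp k (rcomp h k) = k"
    by (simp add: rcomp_assoc kh rcomp_incl_left ran_k)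
  ultimately have hk: "rcomp h k = rid K"
    using univ[OF K k kz] rep_mor_rid[OF K] rcomp_rid_right[OF k] by blast
  have "fst K v \<subseteq> dom (k v)" for v
    using kcomp_eq_restrict_Some(1) fun_cong[OF hk, of v] by (simp add: rcomp_def rid_eq)
  then show "inflation Q K N k"
    using k rep_mor_dom_ran(1)[OF k] by (simp add: inflation_def subset_antisym)
  show "ran (k v) = {n \<in> fst N v. \<phi> v n = None}"
    using ran_k by (simp add: Z_def)
qed

section \<open>Reduction\<close>

text \<open>In the notation of the paper, \<open>ran k\<close> is \<open>U\<^sup>\<perp>\<close>, \<open>reduced_set\<close> is \<open>N//U = U\<^sup>\<perp>/U\<close>
  and \<open>reduced_form\<close> is \<open>P(k) \<psi>\<^sub>N k\<close>.\<close>

locale reduction_data =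
  fixes Q :: "('v, 'e) quiver" and N :: "('v, 'e) rep" and \<psi> :: "'v rmor"
    and U :: "('v, 'e) rep" and j :: "'v rmor"
    and K :: "('v, 'e) rep" and k :: "'v rmor" and i :: "'v rmor"
  assumes quiver_inv: "quiver_inv Q" and form: "sym_form Q N \<psi>" and U: "is_rep Q U"
    and j: "rep_mor Q U N j" and kernel: "is_kernel Q N (rcomp (dual_mor Q j) \<psi>) K k"
    and i: "rep_mor Q U K i" and factor: "rcomp k i = j"
begin

definition reduced_set :: "'v \<Rightarrow> nat set" where
  "reduced_set v = fst K v - ran (i v)"

definition reduced_form :: "'v rmor" where
  "reduced_form = rcomp (dual_mor Q k) (rcomp \<psi> k)"

lemma N: "is_rep Q N"
  and \<psi>: "rep_mor Q N (dual_obj Q N) \<psi>"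
  and dom_\<psi>: "dom (\<psi> v) = fst N v"
  and \<psi>_sym: "\<psi> v n = Some m \<Longrightarrow> \<psi> (sv Q v) m = Some n"
  by (rule sym_formD[OF quiver_inv form])+

lemma K: "is_rep Q K"
  using kernel by (simp add: is_kernel_def)

lemma k_inflation: "inflation Q K N k"
  and ran_k: "ran (k v) = {n \<in> fst N v. rcomp (dual_mor Q j) \<psi> v n = None}"
  using kernel_inflation[OF N rep_mor_rcomp[OF \<psi> dual_rep_mor[OF quiver_inv U N j]] kernel]
  by auto

lemma k: "rep_mor Q K N k" and dom_k: "dom (k v) = fst K v"
  using k_inflation by (auto simp: inflation_def)

lemma inj_k: "inj_on (k v) (dom (k v))"
  using f1_morD(5)[OF rep_morD(1)[OF k]] .

lemma mem_ran_k: "\<psi> v n = Some m \<Longrightarrow> n \<in> ran (k v) \<longleftrightarrow> m \<notin> ran (j (sv Q v))"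
  using dom_\<psi>[of v] by (auto simp: ran_k rcomp_def kcomp_apply transp_None)

lemma mem_ran_i: "k v x = Some n \<Longrightarrow> x \<in> ran (i v) \<longleftrightarrow> n \<in> ran (j v)"
  using f1_morD(2)[OF rep_morD(1)[OF i]] factor
  by (intro mem_ran_factor[OF _ inj_k]) (auto simp: rcomp_def dom_k ran_def)

lemma reduced_form_Some:
  "reduced_form v x = Some y \<longleftrightarrow>
     (\<exists>n m. k v x = Some n \<and> \<psi> v n = Some m \<and> k (sv Q v) y = Some m)"
  unfolding reduced_form_def by (rule dual_sandwich_Some[OF inj_k])

lemma reduced_form_sym: "reduced_form v x = Some y \<Longrightarrow> reduced_form (sv Q v) y = Some x"
  using \<psi>_sym by (auto simp: reduced_form_Some quiver_invD(1)[OF quiver_inv])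

lemma dom_reduced_form: "dom (reduced_form v) = reduced_set v"
proof
  show "dom (reduced_form v) \<subseteq> reduced_set v"
  proof
    fix x assume "x \<in> dom (reduced_form v)"
    then obtain y n m where n: "k v x = Some n" and m: "\<psi> v n = Some m" and y: "k (sv Q v) y = Some m"
      by (auto simp: reduced_form_Some)
    have "n \<notin> ran (j v)"
      using mem_ran_k[OF \<psi>_sym[OF m]] y by (auto simp: quiver_invD(1)[OF quiver_inv] ran_def)
    then show "x \<in> reduced_set v"
      using n mem_ran_i[OF n] dom_k[of v] by (auto simp: reduced_set_def)
  qed
  show "reduced_set v \<subseteq> dom (reduced_form v)"
  proof
    fix x assume x: "x \<in> reduced_set v"
    then obtain n where n: "k v x = Some n"
      using dom_k[of v] by (auto simp: reduced_set_def)
    then obtain m where m: "\<psi> v n = Some m"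
      using f1_morD(2)[OF rep_morD(1)[OF k]] dom_\<psi>[of v] by blast
    have "n \<notin> ran (j v)"
      using x mem_ran_i[OF n] by (simp add: reduced_set_def)
    then have "m \<in> ran (k (sv Q v))"
      using mem_ran_k[OF \<psi>_sym[OF m]] by (simp add: quiver_invD(1)[OF quiver_inv])
    then show "x \<in> dom (reduced_form v)"
      using n m by (auto simp: reduced_form_Some ran_def)
  qed
qed

lemma reduced_form_values:
  "reduced_form v x = Some y \<Longrightarrow> x \<in> reduced_set v \<and> y \<in> reduced_set (sv Q v)"
  using dom_reduced_form reduced_form_sym by blast

lemma quot_eq: "quot Q K i = restrict_rep Q K reduced_set"
  by (simp add: quot_eq_restrict_rep[OF K] reduced_set_def[abs_def])

lemma quot_map_eq: "quot_map K i = incl reduced_set"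
  by (simp add: quot_map_eq_incl reduced_set_def[abs_def])

lemma sym_form_reduced_form: "sym_form Q (quot Q K i) reduced_form"
  unfolding quot_eq
proof (rule sym_formI[OF quiver_inv])
  show "is_rep Q (restrict_rep Q K reduced_set)"
    by (rule is_rep_restrict_rep[OF K]) (auto simp: reduced_set_def)
  have "rep_mor Q K (dual_obj Q K) reduced_form"
    unfolding reduced_form_def
    by (rule rep_mor_rcomp[OF rep_mor_rcomp[OF k \<psi>] dual_rep_mor[OF quiver_inv K N k]])
  then show "rep_mor Q (restrict_rep Q K reduced_set)
      (dual_obj Q (restrict_rep Q K reduced_set)) reduced_form"
    unfolding restrict_rep_dual_obj[OF quiver_inv K]
    by (rule rep_mor_restrict_rep) (rule reduced_form_values)
qed (simp_all add: dom_reduced_form reduced_form_sym)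

lemma quot_map_sandwich:
  assumes "sym_form Q (quot Q K i) \<psi>'"
  shows "rcomp (dual_mor Q (quot_map K i)) (rcomp \<psi>' (quot_map K i)) = \<psi>'"
proof -
  have "rep_mor Q (quot Q K i) (dual_obj Q (quot Q K i)) \<psi>'"
    by (rule sym_formD(2)[OF quiver_inv assms])
  then show ?thesis
    unfolding quot_map_eq
    by (intro dual_incl_sandwich) (auto dest: f1_morD(1,2)[OF rep_morD(1)] simp: quot_eq)
qed

lemma reduced_form_exists:
  "\<exists>\<psi>'. sym_form Q (quot Q K i) \<psi>' \<and>
     rcomp (dual_mor Q k) (rcomp \<psi> k) = rcomp (dual_mor Q (quot_map K i)) (rcomp \<psi>' (quot_map K i))"
  using sym_form_reduced_form quot_map_sandwich by (auto simp: reduced_form_def)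

lemma reduced_form_unique:
  assumes "sym_form Q (quot Q K i) \<psi>1" "sym_form Q (quot Q K i) \<psi>2"
    and "rcomp (dual_mor Q k) (rcomp \<psi> k) = rcomp (dual_mor Q (quot_map K i)) (rcomp \<psi>1 (quot_map K i))"
    and "rcomp (dual_mor Q k) (rcomp \<psi> k) = rcomp (dual_mor Q (quot_map K i)) (rcomp \<psi>2 (quot_map K i))"
  shows "\<exists>\<phi>. rep_iso Q (quot Q K i) (quot Q K i) \<phi> \<and> rcomp (dual_mor Q \<phi>) (rcomp \<psi>2 \<phi>) = \<psi>1"
proof -
  have "\<psi>1 = \<psi>2"
    using assms quot_map_sandwich by metis
  moreover have "rid (quot Q K i) = quot_map K i"
    by (simp add: rid_eq_incl quot_map_eq quot_eq)
  moreover have "rep_iso Q (quot Q K i) (quot Q K i) (rid (quot Q K i))"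
    by (rule rep_iso_rid[OF sym_formD(1)[OF quiver_inv sym_form_reduced_form]])
  ultimately show ?thesis
    using quot_map_sandwich[OF assms(2)] by metis
qed

end

lemma Rep_reduction_assumption:
  assumes "quiver_inv Q"
  shows "reduction_assumption Q"
  unfolding reduction_assumption_def Let_def
  apply (intro allI impI)
  subgoal premises prems for N \<psi> U j K k i
  proof -
    interpret reduction_data Q N \<psi> U j K k i
      using assms prems by unfold_locales (auto simp: isotropic_def inflation_def)
    show ?thesis
      using reduced_form_exists reduced_form_unique by blast
  qed
  done

theorem lemma1p8:
  fixes Q :: "('v, 'e) quiver"
  assumes "quiver_inv Q"
  shows "combinatorial Q \<and> finite_direct_decomposition Q \<and> reduction_assumption Q"
  using Rep_combinatorial Rep_finite_direct_decomposition Rep_reduction_assumption[OF assms]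
  by blast

end
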